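(* Assume $\alpha\le\beta+1$ and set $\lambda=\lfloor(\beta+1)/\alpha\rfloor$. Let $\mathcal{S}_0\subseteq\mathcal{S}$ be nonempty with maximum $\overline{s}$ and minimum $\underline{s}$, let $l=\lfloor(\beta+\underline{s}-\overline{s})/\alpha\rfloor$, and let $n\ge l$. Then there exists a set $\mathcal{V}^n(\mathcal{S}_0)\subseteq\mathbb{Z}^n$ of request sequences such that $$\log_2\big|\mathcal{V}^n(\mathcal{S}_0)\big|\le \left\lceil \frac{n-l}{\lambda}\right\rceil,$$ and such that for every input pair $(s_0,\mathbf{x})\in\mathcal{S}_0\times\mathcal{X}^n$ we have $\mathcal{Y}^n(s_0,\mathbf{x})\cap\mathcal{V}^n(\mathcal{S}_0)\neq\emptyset$ (feasible sets taken with output alphabet $\mathbb{Z}$).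
   Context: Fix integers $\alpha\ge 1$ (maximal consumption per step) and $\beta\ge 0$ (battery capacity). Let $\mathcal{X}=\{0,1,\dots,\alpha\}$ and $\mathcal{S}=\{0,1,\dots,\beta\}$. For an initial battery state $s_0\in\mathcal{S}$, a consumption sequence $\mathbf{x}=(x_0,\dots,x_{n-1})\in\mathcal{X}^n$ and a request sequence $\mathbf{y}=(y_0,\dots,y_{n-1})\in\mathbb{Z}^n$, the battery states are $s_i=s_0+\sum_{k=0}^{i-1}y_k-\sum_{k=0}^{i-1}x_k$ for $i=0,1,\dots,n$. For an output alphabet $\mathcal{Y}\subseteq\mathbb{Z}$, the set of feasible requests is $\mathcal{Y}^n(s_0,\mathbf{x})=\{\mathbf{y}\in\mathcal{Y}^n: s_i\in\{0,\dots,\beta\}\text{ for all } i=0,\dots,n\}$. *)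

theory Defs
  imports Complex_Main
begin

definition battery_state :: "nat \<Rightarrow> nat list \<Rightarrow> int list \<Rightarrow> nat \<Rightarrow> int" where
  "battery_state s0 x y i = int s0 + sum_list (take i y) - sum_list (take i (map int x))"

definition feasible_requests :: "nat \<Rightarrow> int set \<Rightarrow> nat \<Rightarrow> nat \<Rightarrow> nat list \<Rightarrow> int list set" where
  "feasible_requests beta Y n s0 x =
     {y. length y = n \<and> set y \<subseteq> Y \<and>
         (\<forall>i\<le>n. 0 \<le> battery_state s0 x y i \<and> battery_state s0 x y i \<le> int beta)}"

end

theory Submission
  imports Defs
begin

text \<open>First charge the battery by \<open>\<beta> - max S0\<close>, which lifts every admissible initial state to at
  least \<open>\<beta> + min S0 - max S0\<close>, enough to survive the first \<open>l\<close> steps without further requests.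
  Then split the remaining steps into blocks of length \<open>\<lambda>\<close>, where \<open>\<alpha>\<lambda> \<le> \<beta> + 1\<close>: in each block
  either the current charge covers the whole consumption of the block and we request nothing, or
  it does not, the charge is then below \<open>\<alpha>\<lambda>\<close>, and requesting \<open>\<alpha>\<close> at every step of the block never
  overflows. One bit per block selects the strategy, so \<open>\<lceil>(n - l)/\<lambda>\<rceil>\<close> bits suffice.\<close>

definition admissible_requests :: "int \<Rightarrow> int \<Rightarrow> int list \<Rightarrow> int list \<Rightarrow> bool" where
  "admissible_requests b s xs ys \<longleftrightarrow> length ys = length xs \<and>
     (\<forall>i\<le>length xs. 0 \<le> s + sum_list (take i ys) - sum_list (take i xs) \<and>
                     s + sum_list (take i ys) - sum_list (take i xs) \<le> b)"

definition block_word :: "nat \<Rightarrow> int \<Rightarrow> bool list \<Rightarrow> int list" where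
  "block_word lam a bs = concat (map (\<lambda>c. replicate lam (if c then a else 0)) bs)"

lemma length_block_word [simp]: "length (block_word lam a bs) = lam * length bs"
  by (induction bs) (simp_all add: block_word_def)

lemma feasible_requests_iff_admissible:
  assumes "length x = n"
  shows "y \<in> feasible_requests \<beta> UNIV n s0 x \<longleftrightarrow>
         admissible_requests (int \<beta>) (int s0) (map int x) y"
  using assms
  by (auto simp: feasible_requests_def admissible_requests_def battery_state_def simp flip: take_map)

lemma admissible_requests_final:
  assumes "admissible_requests b s xs ys"
  shows "0 \<le> s + sum_list ys - sum_list xs" "s + sum_list ys - sum_list xs \<le> b"
  using assms unfolding admissible_requests_def by (metis order.refl take_all)+

lemma admissible_requests_append:
  assumes "admissible_requests b s xs1 ys1"
    and "admissible_requests b (s + sum_list ys1 - sum_list xs1) xs2 ys2"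
  shows "admissible_requests b s (xs1 @ xs2) (ys1 @ ys2)"
  unfolding admissible_requests_def
proof (intro conjI allI impI)
  have len: "length ys1 = length xs1" "length ys2 = length xs2"
    using assms by (simp_all add: admissible_requests_def)
  then show "length (ys1 @ ys2) = length (xs1 @ xs2)" by simp
  fix i assume i: "i \<le> length (xs1 @ xs2)"
  have "0 \<le> s + sum_list (take i (ys1 @ ys2)) - sum_list (take i (xs1 @ xs2)) \<and>
        s + sum_list (take i (ys1 @ ys2)) - sum_list (take i (xs1 @ xs2)) \<le> b"
  proof (cases "i \<le> length xs1")
    case True
    then show ?thesis using assms(1) len by (simp add: admissible_requests_def)
  next
    case False
    then have "i - length xs1 \<le> length xs2" using i by simp
    then have "0 \<le> (s + sum_list ys1 - sum_list xs1) + sum_list (take (i - length xs1) ys2)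
                  - sum_list (take (i - length xs1) xs2) \<and>
               (s + sum_list ys1 - sum_list xs1) + sum_list (take (i - length xs1) ys2)
                  - sum_list (take (i - length xs1) xs2) \<le> b"
      using assms(2) unfolding admissible_requests_def by blast
    then show ?thesis using len False by simp
  qed
  then show "0 \<le> s + sum_list (take i (ys1 @ ys2)) - sum_list (take i (xs1 @ xs2))"
    "s + sum_list (take i (ys1 @ ys2)) - sum_list (take i (xs1 @ xs2)) \<le> b" by auto
qed

lemma sum_list_bounds:
  assumes "\<forall>x\<in>set xs. 0 \<le> x \<and> x \<le> (a::int)"
  shows "0 \<le> sum_list xs" "sum_list xs \<le> a * int (length xs)"
  using assms by (induction xs) (auto simp: algebra_simps)

lemma sum_list_take_drop_bounds:
  assumes "\<forall>x\<in>set xs. 0 \<le> x \<and> x \<le> (a::int)" "i \<le> length xs"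
  shows "0 \<le> sum_list (take i xs)" "sum_list (take i xs) \<le> a * int i"
    and "0 \<le> sum_list (drop i xs)" "sum_list (drop i xs) \<le> a * (int (length xs) - int i)"
    and "sum_list xs = sum_list (take i xs) + sum_list (drop i xs)"
  using sum_list_bounds[of "take i xs" a] sum_list_bounds[of "drop i xs" a] assms
  by (auto dest: in_set_takeD in_set_dropD simp: min_absorb2
      simp flip: sum_list_append)

lemma admissible_constant_block:
  assumes "0 \<le> s" "s \<le> b" "\<forall>x\<in>set xs. 0 \<le> x \<and> x \<le> a" "a * int (length xs) \<le> b + 1"
  shows "\<exists>c. admissible_requests b s xs (replicate (length xs) (if c then a else 0))"
proof (cases "sum_list xs \<le> s")
  case True
  have "admissible_requests b s xs (replicate (length xs) 0)"
    unfolding admissible_requests_def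
  proof (intro conjI allI impI)
    fix i assume i: "i \<le> length xs"
    note bounds = sum_list_take_drop_bounds[OF assms(3) i]
    show "0 \<le> s + sum_list (take i (replicate (length xs) 0)) - sum_list (take i xs)"
      "s + sum_list (take i (replicate (length xs) 0)) - sum_list (take i xs) \<le> b"
      using bounds True assms(2) by (simp_all add: sum_list_replicate)
  qed simp
  then show ?thesis by (intro exI[of _ False]) simp
next
  case False
  \<comment> \<open>then \<open>s < sum_list xs \<le> a * length xs \<le> b + 1\<close>, so even the final level \<open>s + a * length xs - sum_list xs\<close> is at most \<open>b\<close>\<close>
  have "admissible_requests b s xs (replicate (length xs) a)"
    unfolding admissible_requests_def
  proof (intro conjI allI impI)
    fix i assume i: "i \<le> length xs"
    note bounds = sum_list_take_drop_bounds[OF assms(3) i]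
    have "sum_list (take i (replicate (length xs) a)) = a * int i"
      using i by (simp add: min_def sum_list_replicate)
    then show "0 \<le> s + sum_list (take i (replicate (length xs) a)) - sum_list (take i xs)"
      "s + sum_list (take i (replicate (length xs) a)) - sum_list (take i xs) \<le> b"
      using bounds False assms(1,4) by (simp_all add: algebra_simps)
  qed simp
  then show ?thesis by (intro exI[of _ True]) simp
qed

lemma admissible_block_code:
  assumes "0 \<le> a" "a * int lam \<le> b + 1"
  shows "\<forall>x\<in>set xs. 0 \<le> x \<and> x \<le> a \<Longrightarrow> 0 \<le> s \<Longrightarrow> s \<le> b \<Longrightarrow> length xs \<le> lam * m \<Longrightarrow>
    \<exists>bs. length bs = m \<and> admissible_requests b s xs (take (length xs) (block_word lam a bs))"
proof (induction m arbitrary: xs s)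
  case 0
  then show ?case by (simp add: admissible_requests_def)
next
  case (Suc m)
  define xs1 where "xs1 = take lam xs"
  define xs2 where "xs2 = drop lam xs"
  have xs1_bounds: "\<forall>x\<in>set xs1. 0 \<le> x \<and> x \<le> a"
    using Suc.prems(1) by (auto simp: xs1_def dest: in_set_takeD)
  have "a * int (length xs1) \<le> a * int lam"
    using assms(1) by (simp add: xs1_def mult_left_mono)
  then obtain c where c: "admissible_requests b s xs1 (replicate (length xs1) (if c then a else 0))"
    using admissible_constant_block[OF Suc.prems(2,3) xs1_bounds] assms(2) by fastforce
  note level = admissible_requests_final[OF c]
  have xs2_bounds: "\<forall>x\<in>set xs2. 0 \<le> x \<and> x \<le> a"
    using Suc.prems(1) by (auto simp: xs2_def dest: in_set_dropD)
  have "length xs2 \<le> lam * m"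
    using Suc.prems(4) by (simp add: xs2_def)
  then obtain bs where bs: "length bs = m"
    "admissible_requests b (s + sum_list (replicate (length xs1) (if c then a else 0)) - sum_list xs1)
       xs2 (take (length xs2) (block_word lam a bs))"
    using Suc.IH[OF xs2_bounds level] by blast
  have "take (length xs) (block_word lam a (c # bs)) =
        replicate (length xs1) (if c then a else 0) @ take (length xs2) (block_word lam a bs)"
    by (simp add: block_word_def xs1_def xs2_def min_def)
  then show ?case
    using admissible_requests_append[OF c bs(2)] bs(1)
    by (intro exI[of _ "c # bs"]) (simp add: xs1_def xs2_def)
qed

lemma admissible_charge_then_idle:
  assumes "\<forall>x\<in>set xs. 0 \<le> x \<and> x \<le> a" "0 \<le> s" "0 \<le> c" "s + c \<le> b"
    and "a * int (length xs) \<le> s + c"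
  shows "admissible_requests b s xs (take (length xs) (c # replicate (length xs) 0))"
  unfolding admissible_requests_def
proof (intro conjI allI impI)
  fix i assume i: "i \<le> length xs"
  note bounds = sum_list_take_drop_bounds[OF assms(1) i]
  have "sum_list (take i (take (length xs) (c # replicate (length xs) 0))) = (if i = 0 then 0 else c)"
    using i by (cases i) (auto simp: min_def sum_list_replicate)
  then show "0 \<le> s + sum_list (take i (take (length xs) (c # replicate (length xs) 0))) - sum_list (take i xs)"
    "s + sum_list (take i (take (length xs) (c # replicate (length xs) 0))) - sum_list (take i xs) \<le> b"
    using bounds sum_list_bounds(2)[OF assms(1)] assms by auto
qed simp

lemma admissible_two_phase_code:
  assumes "\<forall>x\<in>set xs. 0 \<le> x \<and> x \<le> a" "0 \<le> s" "0 \<le> c" "s + c \<le> b"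
    and "a * int l \<le> s + c" "l \<le> length xs"
    and "0 \<le> a" "a * int lam \<le> b + 1" "length xs - l \<le> lam * m"
  shows "\<exists>bs. length bs = m \<and> admissible_requests b s xs
           (take l (c # replicate l 0) @ take (length xs - l) (block_word lam a bs))"
proof -
  have prefix: "admissible_requests b s (take l xs) (take l (c # replicate l 0))"
    using admissible_charge_then_idle[of "take l xs" a s c b] assms(1-6)
    by (auto simp: min_absorb2 dest: in_set_takeD)
  note level = admissible_requests_final[OF prefix]
  have suffix_bounds: "\<forall>x\<in>set (drop l xs). 0 \<le> x \<and> x \<le> a"
    using assms(1) by (auto dest: in_set_dropD)
  obtain bs where "length bs = m" and suffix:
    "admissible_requests b (s + sum_list (take l (c # replicate l 0)) - sum_list (take l xs))
       (drop l xs) (take (length xs - l) (block_word lam a bs))"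
    using admissible_block_code[OF assms(7,8) suffix_bounds level] assms(9) by auto
  then show ?thesis
    using admissible_requests_append[OF prefix suffix] by auto
qed

lemma log2_card_image_bool_lists_le:
  "log 2 (real (card (f ` {bs :: bool list. length bs = m}))) \<le> real m"
proof -
  have fin: "finite {bs :: bool list. length bs = m}"
    using finite_lists_length_eq[of "UNIV :: bool set" m] by simp
  have "card (f ` {bs :: bool list. length bs = m}) \<le> 2 ^ m"
    using card_image_le[OF fin] card_lists_length_eq[of "UNIV :: bool set" m] by simp
  then have "real (card (f ` {bs. length bs = m})) \<le> 2 ^ m"
    by (metis of_nat_le_iff of_nat_numeral of_nat_power)
  moreover have "0 < card (f ` {bs :: bool list. length bs = m})"
    using fin by (auto simp: card_gt_0_iff intro: exI[of _ "replicate m False"])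
  ultimately have "log 2 (real (card (f ` {bs. length bs = m}))) \<le> log 2 (2 ^ m)"
    by (intro log_mono) simp_all
  then show ?thesis by (simp add: log_nat_power)
qed

lemma two_phase_code_feasible:
  fixes \<alpha> \<beta> lam l m n smin smax s0 :: nat
  assumes "smin \<le> s0" "s0 \<le> smax" "smax \<le> \<beta>" "\<alpha> * l \<le> \<beta> + smin - smax" "l \<le> n"
    and "\<alpha> * lam \<le> \<beta> + 1" "n - l \<le> lam * m"
    and "length x = n" "set x \<subseteq> {0..\<alpha>}"
  shows "\<exists>bs. length bs = m \<and>
    take l (int (\<beta> - smax) # replicate l 0) @ take (n - l) (block_word lam (int \<alpha>) bs)
      \<in> feasible_requests \<beta> UNIV n s0 x"
proof -
  have "\<alpha> * l \<le> s0 + (\<beta> - smax)"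
    using assms(1-4) by linarith
  then have prefix_bound: "int \<alpha> * int l \<le> int s0 + int (\<beta> - smax)"
    by (simp only: of_nat_le_iff flip: of_nat_mult of_nat_add)
  have block_bound: "int \<alpha> * int lam \<le> int \<beta> + 1"
    using assms(6) by (simp only: of_nat_le_iff of_nat_1 flip: of_nat_mult of_nat_add)
  have "\<forall>y\<in>set (map int x). 0 \<le> y \<and> y \<le> int \<alpha>"
    using assms(9) by auto
  then show ?thesis
    using admissible_two_phase_code[of "map int x" "int \<alpha>" "int s0" "int (\<beta> - smax)" "int \<beta>" l lam m]
      prefix_bound block_bound assms(2,3,5,7,8)
    by (auto simp: feasible_requests_iff_admissible)
qed

lemma le_mult_nat_ceiling_divide:
  assumes "0 < d"
  shows "k \<le> d * nat \<lceil>real k / real d\<rceil>"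
proof -
  have "0 \<le> real k / real d"
    by simp
  then have "real k / real d \<le> real (nat \<lceil>real k / real d\<rceil>)"
    using le_of_int_ceiling by simp
  then have "real k \<le> real (nat \<lceil>real k / real d\<rceil>) * real d"
    using assms by (simp only: pos_divide_le_eq of_nat_0_less_iff)
  then show ?thesis
    by (simp only: mult.commute[of d] of_nat_le_iff flip: of_nat_mult)
qed

theorem theorem1:
  fixes \<alpha> \<beta> n :: nat and S0 :: "nat set"
  assumes "1 \<le> \<alpha>" and "\<alpha> \<le> \<beta> + 1"
    and "S0 \<subseteq> {0..\<beta>}" and "S0 \<noteq> {}"
    and "n \<ge> (\<beta> + Min S0 - Max S0) div \<alpha>"
  shows "\<exists>V :: int list set.
           (\<forall>y\<in>V. length y = n) \<and> finite V \<and>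
           log 2 (real (card V))
             \<le> real_of_int \<lceil>(real n - real ((\<beta> + Min S0 - Max S0) div \<alpha>))
                              / real ((\<beta> + 1) div \<alpha>)\<rceil> \<and>
           (\<forall>s0\<in>S0. \<forall>x. length x = n \<and> set x \<subseteq> {0..\<alpha>} \<longrightarrow>
              feasible_requests \<beta> UNIV n s0 x \<inter> V \<noteq> {})"
proof -
  define l where "l = (\<beta> + Min S0 - Max S0) div \<alpha>"
  define lam where "lam = (\<beta> + 1) div \<alpha>"
  define m where "m = nat \<lceil>(real n - real l) / real lam\<rceil>"
  define V where "V = (\<lambda>bs. take l (int (\<beta> - Max S0) # replicate l 0) @ take (n - l) (block_word lam (int \<alpha>) bs))
                        ` {bs. length bs = m}"
  have fin: "finite S0"
    using assms(3) finite_subset by blast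
  have Max_le: "Max S0 \<le> \<beta>"
    using Max_in[OF fin assms(4)] assms(3) by auto
  have lam: "\<alpha> * lam \<le> \<beta> + 1" "0 < lam" and l: "\<alpha> * l \<le> \<beta> + Min S0 - Max S0" "l \<le> n"
    using assms(1,2,5) times_div_less_eq_dividend
    by (simp_all add: lam_def l_def div_greater_zero_iff)
  have real_diff: "real n - real l = real (n - l)"
    using l(2) by simp
  have "n - l \<le> lam * m"
    unfolding m_def real_diff using lam(2) by (rule le_mult_nat_ceiling_divide)
  then have "feasible_requests \<beta> UNIV n s0 x \<inter> V \<noteq> {}"
    if "s0 \<in> S0" "length x = n" "set x \<subseteq> {0..\<alpha>}" for s0 x
    using two_phase_code_feasible[of "Min S0" s0 "Max S0" \<beta> \<alpha> l n lam m x] that fin Max_le lam l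
    by (fastforce simp: V_def)
  moreover have "log 2 (real (card V)) \<le> real_of_int \<lceil>(real n - real l) / real lam\<rceil>"
    using log2_card_image_bool_lists_le[of _ m] by (simp add: V_def m_def real_diff)
  moreover have "finite V" "\<forall>y\<in>V. length y = n"
    using finite_lists_length_eq[of "UNIV :: bool set" m] \<open>n - l \<le> lam * m\<close> l(2)
    by (auto simp: V_def)
  ultimately show ?thesis
    unfolding l_def[symmetric] lam_def[symmetric] by blast
qed

end
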